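(* Let $\lambda,\mu,\nu\in\mathbb{R}$, not all zero, and let $G\subseteq\mathbb{R}\times\mathrm{U}(1)^2$ be the subgroup of elements $(c,e^{i\phi_1},e^{i\phi_2})$ with $\lambda c+\mu\phi_1+\nu\phi_2=0$, acting on $\mathbb{R}\oplus\mathbb{C}^3$ by $(x_1,z_1,z_2,z_3)\mapsto(x_1+c,e^{i\phi_1}z_1,e^{i\phi_2}z_2,e^{-i(\phi_1+\phi_2)}z_3)$. Let $x_1(t)$ be real and $z_1(t),z_2(t),z_3(t)$ complex smooth functions satisfying $$\dot x_1=0,\quad \dot z_1=-\nu z_1-\lambda\overline{z_2z_3},\quad \dot z_2=\mu z_2-\lambda\overline{z_3z_1},\quad \dot z_3=(\nu-\mu)z_3-\lambda\overline{z_1z_2},$$ with initial point whose $G$-orbit is $2$-dimensional. Then there exists $\epsilon>0$ such that a solution exists for $t\in(-\epsilon,\epsilon)$, and $$M=\big\{\big(x_1(t)+c,\,e^{i\phi_1}z_1(t),\,e^{i\phi_2}z_2(t),\,e^{-i(\phi_1+\phi_2)}z_3(t)\big):t\in(-\epsilon,\epsilon),\ (c,e^{i\phi_1},e^{i\phi_2})\in G\big\}$$ is an associative $3$-fold in $\mathbb{R}^7$. Moreover, if $\mu,\nu$ are not both zero, $M$ does not lie in $\{x\}\times\mathbb{C}^3$ for any $x\in\mathbb{R}$, and along solutions $\mathrm{Im}(z_1z_2z_3)=A$ is a real constant.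
   Context: $\mathbb{R}^7\cong\mathbb{R}\oplus\mathbb{C}^3$ via $z_1=x_2+ix_3$, $z_2=x_4+ix_5$, $z_3=x_6+ix_7$. Associative $3$-folds are oriented $3$-dimensional submanifolds calibrated by $\varphi_0=d\mathbf{x}_{123}+d\mathbf{x}_{145}+d\mathbf{x}_{167}+d\mathbf{x}_{246}-d\mathbf{x}_{257}-d\mathbf{x}_{347}-d\mathbf{x}_{356}$ ($d\mathbf{x}_{ijk}=dx_i\wedge dx_j\wedge dx_k$), i.e. $\varphi_0|_{T_xN}=\mathrm{vol}_{T_xN}$. *)

theory Defs
  imports "HOL-Analysis.Analysis"
begin

text \<open>R^7 = R (+) C^3 with x1, z1 = x2 + i x3, z2 = x4 + i x5, z3 = x6 + i x7.
  The product type carries the Euclidean inner product of R^7.\<close>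
type_synonym R7 = "real \<times> complex \<times> complex \<times> complex"

definition coord :: "R7 \<Rightarrow> nat \<Rightarrow> real" where
  "coord p k = (case p of (x1, z1, z2, z3) \<Rightarrow>
     (if k = 1 then x1 else if k = 2 then Re z1 else if k = 3 then Im z1
      else if k = 4 then Re z2 else if k = 5 then Im z2
      else if k = 6 then Re z3 else if k = 7 then Im z3 else 0))"

definition dx3 :: "nat \<Rightarrow> nat \<Rightarrow> nat \<Rightarrow> R7 \<Rightarrow> R7 \<Rightarrow> R7 \<Rightarrow> real" where
  "dx3 i j k u v w =
     coord u i * (coord v j * coord w k - coord v k * coord w j)
   - coord u j * (coord v i * coord w k - coord v k * coord w i)
   + coord u k * (coord v i * coord w j - coord v j * coord w i)"

definition phi0 :: "R7 \<Rightarrow> R7 \<Rightarrow> R7 \<Rightarrow> real" where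
  "phi0 u v w = dx3 1 2 3 u v w + dx3 1 4 5 u v w + dx3 1 6 7 u v w + dx3 2 4 6 u v w
              - dx3 2 5 7 u v w - dx3 3 4 7 u v w - dx3 3 5 6 u v w"

definition vol3 :: "R7 \<Rightarrow> R7 \<Rightarrow> R7 \<Rightarrow> real" where
  "vol3 u v w = sqrt (
       (u \<bullet> u) * ((v \<bullet> v) * (w \<bullet> w) - (v \<bullet> w) * (w \<bullet> v))
     - (u \<bullet> v) * ((v \<bullet> u) * (w \<bullet> w) - (v \<bullet> w) * (w \<bullet> u))
     + (u \<bullet> w) * ((v \<bullet> u) * (w \<bullet> v) - (v \<bullet> v) * (w \<bullet> u)))"

text \<open>An (immersed, connected) associative 3-fold: a set which is the image of a C^1
  immersion F of a connected open subset of R^3 into R^7, oriented (by F or by its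
  reverse) so that phi0 restricts to the volume form on every tangent space.\<close>
definition associative_3fold :: "R7 set \<Rightarrow> bool" where
  "associative_3fold M \<longleftrightarrow>
     (\<exists>(U :: (real \<times> real \<times> real) set) (F :: real \<times> real \<times> real \<Rightarrow> R7) DF s.
        open U \<and> connected U \<and> U \<noteq> {} \<and> F ` U = M \<and>
        (\<forall>u\<in>U. (F has_derivative blinfun_apply (DF u)) (at u)) \<and>
        continuous_on U DF \<and>
        (\<forall>u\<in>U. inj (blinfun_apply (DF u))) \<and>
        (s = 1 \<or> s = -1) \<and>
        (\<forall>u\<in>U. s * phi0 (DF u (1,0,0)) (DF u (0,1,0)) (DF u (0,0,1))
                 = vol3 (DF u (1,0,0)) (DF u (0,1,0)) (DF u (0,0,1))))"

definition act :: "real \<Rightarrow> real \<Rightarrow> real \<Rightarrow> R7 \<Rightarrow> R7" where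
  "act c a b p = (case p of (x1, z1, z2, z3) \<Rightarrow>
     (x1 + c, cis a * z1, cis b * z2, cis (- (a + b)) * z3))"

definition inf_act :: "real \<Rightarrow> real \<Rightarrow> real \<Rightarrow> R7 \<Rightarrow> R7" where
  "inf_act c a b p = (case p of (x1, z1, z2, z3) \<Rightarrow>
     (c, \<i> * a * z1, \<i> * b * z2, - \<i> * (a + b) * z3))"

text \<open>The G-orbit through p is 2-dimensional (G has the 2-dimensional Lie algebra
  g = {(c,a,b). lam c + mu a + nu b = 0}): the infinitesimal action restricted to g is
  injective, i.e. its rank is 2 = dim g.\<close>
definition orbit_2dim :: "real \<Rightarrow> real \<Rightarrow> real \<Rightarrow> R7 \<Rightarrow> bool" where
  "orbit_2dim lam mu nu p \<longleftrightarrow>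
     (\<forall>c a b. lam * c + mu * a + nu * b = 0 \<and> inf_act c a b p = 0 \<longrightarrow> c = 0 \<and> a = 0 \<and> b = 0)"

definition is_solution ::
  "real \<Rightarrow> real \<Rightarrow> real \<Rightarrow> R7 \<Rightarrow> real set \<Rightarrow>
   (real \<Rightarrow> real) \<Rightarrow> (real \<Rightarrow> complex) \<Rightarrow> (real \<Rightarrow> complex) \<Rightarrow> (real \<Rightarrow> complex) \<Rightarrow> bool" where
  "is_solution lam mu nu p0 I x1 z1 z2 z3 \<longleftrightarrow>
     (x1 0, z1 0, z2 0, z3 0) = p0 \<and>
     (\<forall>t\<in>I.
        (x1 has_real_derivative 0) (at t) \<and>
        (z1 has_vector_derivative (- of_real nu * z1 t - of_real lam * cnj (z2 t * z3 t))) (at t) \<and>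
        (z2 has_vector_derivative (of_real mu * z2 t - of_real lam * cnj (z3 t * z1 t))) (at t) \<and>
        (z3 has_vector_derivative (of_real (nu - mu) * z3 t - of_real lam * cnj (z1 t * z2 t))) (at t))"

definition swept :: "real \<Rightarrow> real \<Rightarrow> real \<Rightarrow> real set \<Rightarrow>
   (real \<Rightarrow> real) \<Rightarrow> (real \<Rightarrow> complex) \<Rightarrow> (real \<Rightarrow> complex) \<Rightarrow> (real \<Rightarrow> complex) \<Rightarrow> R7 set" where
  "swept lam mu nu I x1 z1 z2 z3 =
     {act c a b (x1 t, z1 t, z2 t, z3 t) | t c a b. t \<in> I \<and> lam * c + mu * a + nu * b = 0}"

end

(* Choose a basis xi1 = (c1, a1, b1), xi2 = (c2, a2, b2) of the Lie algebra
   g = {(c, a, b). lam c + mu a + nu b = 0} with xi1 x xi2 = tau (lam, mu, nu).  At every point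
   the velocity V of the ODE and the generators X1, X2 of the action satisfy the polynomial
   identities V . X1 = V . X2 = 0 and tau^2 |V|^2 = tau phi0(V, X1, X2) = |X1|^2 |X2|^2 - (X1 . X2)^2.
   So wherever the orbit is 2-dimensional, (V, X1, X2) spans a 3-plane calibrated by sgn tau * phi0.
   The rotations preserve the metric and phi0 = dx1 ^ omega + Re Omega, hence the parametrisation
   (t, s1, s2) |-> exp (s1 xi1 + s2 xi2) . P t of M is a calibrated immersion.  The orbit stays
   2-dimensional along the solution: for a degenerate direction X the function q = |X (P t)|^2
   satisfies |q'| <= K q, so by Gronwall it cannot reach 0.  Local existence is Picard-Lindelof,
   and Im (z1 z2 z3) has zero derivative along solutions. *)

theory Submission
  imports Defs
begin

section \<open>Coordinates and the torus action\<close>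

lemma inner_R7:
  "((x, z1, z2, z3) :: R7) \<bullet> (y, w1, w2, w3)
     = x * y + Re (cnj z1 * w1) + Re (cnj z2 * w2) + Re (cnj z3 * w3)"
  by (simp add: inner_prod_def inner_complex_def)

lemma act_proj:
  "act c a b p = (fst p + c, cis a * fst (snd p), cis b * fst (snd (snd p)),
                  cis (- (a + b)) * snd (snd (snd p)))"
  by (simp add: act_def split: prod.split)

lemma act_rotation: "act 0 a b (x, u1, u2, u3) = (x, cis a * u1, cis b * u2, cis (- (a + b)) * u3)"
  by (simp add: act_def)

lemma inf_act_proj:
  "inf_act c a b p = (c, \<i> * a * fst (snd p), \<i> * b * fst (snd (snd p)), - \<i> * (a + b) * snd (snd (snd p)))"
  by (simp add: inf_act_def split: prod.split)

lemma inf_act_linear: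
  "inf_act (s1 * c1 + s2 * c2) (s1 * a1 + s2 * a2) (s1 * b1 + s2 * b2) p
     = s1 *\<^sub>R inf_act c1 a1 b1 p + s2 *\<^sub>R inf_act c2 a2 b2 p"
  by (cases p) (simp add: inf_act_def scaleR_conv_of_real algebra_simps)

lemma bounded_linear_inf_act: "bounded_linear (inf_act 0 a b)"
  unfolding linear_conv_bounded_linear[symmetric]
  by (rule linearI) (simp_all add: inf_act_proj algebra_simps scaleR_conv_of_real)

lemma bounded_linear_act_rotation: "bounded_linear (act 0 a b)"
  unfolding linear_conv_bounded_linear[symmetric]
  by (rule linearI) (simp_all add: act_proj algebra_simps scaleR_conv_of_real)

lemma act_rotation_inverse: "act 0 (- a) (- b) (act 0 a b p) = p"
  by (cases p) (simp add: act_def cis_mult mult.assoc[symmetric])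

lemma inj_act_rotation: "inj (act 0 a b)"
  by (metis act_rotation_inverse injI)

lemma has_derivative_act:
  assumes "(c has_derivative c') (at x)" "(a has_derivative a') (at x)" "(b has_derivative b') (at x)"
    and "(p has_derivative p') (at x)"
  shows "((\<lambda>x. act (c x) (a x) (b x) (p x)) has_derivative
           (\<lambda>h. act 0 (a x) (b x) (p' h + inf_act (c' h) (a' h) (b' h) (p x)))) (at x)"
  unfolding act_proj
  by (rule derivative_eq_intros assms refl | simp add: inf_act_proj scaleR_conv_of_real algebra_simps)+

section \<open>Invariance of the calibration\<close>

(* phi0 = dx1 ^ omega + Re Omega with omega the Kahler form and Omega = dz1 ^ dz2 ^ dz3; the
   rotations multiply Omega by the product of the three phases, which is 1. *)
type_synonym C3 = "complex \<times> complex \<times> complex"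

fun kahler_form :: "C3 \<Rightarrow> C3 \<Rightarrow> real" where
  "kahler_form (u1, u2, u3) (v1, v2, v3) = Im (cnj u1 * v1) + Im (cnj u2 * v2) + Im (cnj u3 * v3)"

fun complex_volume_form :: "C3 \<Rightarrow> C3 \<Rightarrow> C3 \<Rightarrow> complex" where
  "complex_volume_form (u1, u2, u3) (v1, v2, v3) (w1, w2, w3) =
     u1 * (v2 * w3 - v3 * w2) - u2 * (v1 * w3 - v3 * w1) + u3 * (v1 * w2 - v2 * w1)"

lemma phi0_decomposition:
  "phi0 (x, u) (y, v) (w, q) =
     x * kahler_form v q - y * kahler_form u q + w * kahler_form u v + Re (complex_volume_form u v q)"
  by (cases u; cases v; cases q) (simp add: phi0_def dx3_def coord_def algebra_simps)

lemma cnj_mult_unit: "cnj k * k = 1 \<Longrightarrow> cnj (k * p) * (k * q) = cnj p * q"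
  by (metis (no_types, lifting) complex_cnj_mult mult.assoc mult.left_commute mult_1)

lemma cnj_cis_mult_cis: "cnj (cis a) * cis a = 1"
  by (simp add: cis_cnj cis_mult)

lemma inner_act_rotation: "act 0 a b u \<bullet> act 0 a b v = u \<bullet> v"
  by (cases u; cases v) (simp only: act_rotation inner_R7 cnj_mult_unit[OF cnj_cis_mult_cis])

lemma phi0_act_rotation: "phi0 (act 0 a b u) (act 0 a b v) (act 0 a b w) = phi0 u v w"
proof -
  have volume: "complex_volume_form (k1 * u1, k2 * u2, k3 * u3) (k1 * v1, k2 * v2, k3 * v3) (k1 * w1, k2 * w2, k3 * w3)
     = (k1 * k2 * k3) * complex_volume_form (u1, u2, u3) (v1, v2, v3) (w1, w2, w3)"
    for k1 k2 k3 u1 u2 u3 v1 v2 v3 w1 w2 w3 :: complex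
    by (simp add: algebra_simps)
  have "cis a * cis b * cis (- (a + b)) = 1"
    by (simp add: cis_mult)
  then show ?thesis
    by (cases u; cases v; cases w)
      (simp only: act_rotation phi0_decomposition kahler_form.simps cnj_mult_unit[OF cnj_cis_mult_cis] volume mult_1)
qed

lemma vol3_act_rotation: "vol3 (act 0 a b u) (act 0 a b v) (act 0 a b w) = vol3 u v w"
  by (simp add: vol3_def inner_act_rotation)

lemma phi0_scaleR_left: "phi0 (k *\<^sub>R u) v w = k * phi0 u v w"
  by (simp add: phi0_def dx3_def coord_def algebra_simps split: prod.split)

section \<open>Gram determinants\<close>

definition gram_det :: "'a::real_inner \<Rightarrow> 'a \<Rightarrow> real" where
  "gram_det u v = (u \<bullet> u) * (v \<bullet> v) - (u \<bullet> v)\<^sup>2"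

lemma gram_det_pos_iff_independent:
  fixes u v :: "'a::real_inner"
  shows "gram_det u v > 0 \<longleftrightarrow> (\<forall>s1 s2. s1 *\<^sub>R u + s2 *\<^sub>R v = 0 \<longrightarrow> s1 = 0 \<and> s2 = 0)"
proof
  assume pos: "gram_det u v > 0"
  show "\<forall>s1 s2. s1 *\<^sub>R u + s2 *\<^sub>R v = 0 \<longrightarrow> s1 = 0 \<and> s2 = 0"
  proof (intro allI impI)
    fix s1 s2 assume "s1 *\<^sub>R u + s2 *\<^sub>R v = 0"
    then have eu: "s1 * (u \<bullet> u) + s2 * (u \<bullet> v) = 0" and ev: "s1 * (u \<bullet> v) + s2 * (v \<bullet> v) = 0"
      by (metis inner_add_left inner_scaleR_left inner_zero_left inner_commute)+
    have "s1 * gram_det u v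
        = (v \<bullet> v) * (s1 * (u \<bullet> u) + s2 * (u \<bullet> v)) - (u \<bullet> v) * (s1 * (u \<bullet> v) + s2 * (v \<bullet> v))"
      and "s2 * gram_det u v
        = (u \<bullet> u) * (s1 * (u \<bullet> v) + s2 * (v \<bullet> v)) - (u \<bullet> v) * (s1 * (u \<bullet> u) + s2 * (u \<bullet> v))"
      by (simp_all add: gram_det_def algebra_simps power2_eq_square)
    then have "s1 * gram_det u v = 0" "s2 * gram_det u v = 0"
      by (simp_all only: eu ev mult_zero_right diff_zero)
    then show "s1 = 0 \<and> s2 = 0"
      using pos by simp
  qed
next
  assume indep: "\<forall>s1 s2. s1 *\<^sub>R u + s2 *\<^sub>R v = 0 \<longrightarrow> s1 = 0 \<and> s2 = 0"
  have "u \<noteq> 0"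
    using indep[rule_format, of 1 0] by auto
  define y where "y = (- (u \<bullet> v)) *\<^sub>R u + (u \<bullet> u) *\<^sub>R v"
  have "y \<noteq> 0"
    using indep[rule_format, of "- (u \<bullet> v)" "u \<bullet> u"] \<open>u \<noteq> 0\<close> unfolding y_def by auto
  moreover have "y \<bullet> y = (u \<bullet> u) * gram_det u v"
    by (simp add: y_def gram_det_def inner_add_left inner_add_right inner_commute[of v u] algebra_simps power2_eq_square)
  moreover have "gram_det u v \<ge> 0"
    using Cauchy_Schwarz_ineq[of u v] by (simp add: gram_det_def)
  ultimately show "gram_det u v > 0"
    by (metis \<open>u \<noteq> 0\<close> inner_eq_zero_iff less_eq_real_def mult_zero_right)
qed

lemma vol3_orthogonal:
  assumes "u \<bullet> v = 0" "u \<bullet> w = 0"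
  shows "vol3 u v w = norm u * sqrt (gram_det v w)"
proof -
  have "vol3 u v w = sqrt ((u \<bullet> u) * gram_det v w)"
    using assms by (simp add: vol3_def gram_det_def inner_commute power2_eq_square)
  then show ?thesis
    by (simp add: real_sqrt_mult norm_eq_sqrt_inner)
qed

lemma inj_orthogonal_frame:
  fixes u v w :: "'a::real_inner"
  assumes "u \<noteq> 0" "u \<bullet> v = 0" "u \<bullet> w = 0" "gram_det v w > 0"
  shows "inj (\<lambda>h::real \<times> real \<times> real. fst h *\<^sub>R u + fst (snd h) *\<^sub>R v + snd (snd h) *\<^sub>R w)"
proof (rule linear_injective_0[THEN iffD2])
  show "linear (\<lambda>h::real \<times> real \<times> real. fst h *\<^sub>R u + fst (snd h) *\<^sub>R v + snd (snd h) *\<^sub>R w)"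
    by (intro bounded_linear.linear bounded_linear_add bounded_linear_compose[OF bounded_linear_scaleR_left]
        bounded_linear_fst bounded_linear_compose[OF bounded_linear_fst bounded_linear_snd]
        bounded_linear_compose[OF bounded_linear_snd bounded_linear_snd])
  show "\<forall>h. fst h *\<^sub>R u + fst (snd h) *\<^sub>R v + snd (snd h) *\<^sub>R w = 0 \<longrightarrow> h = 0"
  proof (intro allI impI)
    fix h :: "real \<times> real \<times> real"
    assume h: "fst h *\<^sub>R u + fst (snd h) *\<^sub>R v + snd (snd h) *\<^sub>R w = 0"
    then have "fst h * (u \<bullet> u) = 0"
      using assms(2,3)
      by (metis inner_add_right inner_scaleR_right inner_zero_right add.right_neutral mult_zero_right)
    then have "fst h = 0"
      using assms(1) by simp
    then have "fst (snd h) = 0 \<and> snd (snd h) = 0"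
      using h assms(4) gram_det_pos_iff_independent[of v w] by auto
    then show "h = 0"
      using \<open>fst h = 0\<close> by (simp add: prod_eq_iff)
  qed
qed

section \<open>The vector field\<close>

definition ode_field :: "real \<Rightarrow> real \<Rightarrow> real \<Rightarrow> R7 \<Rightarrow> R7" where
  "ode_field lam mu nu p = (case p of (x, z1, z2, z3) \<Rightarrow>
     (0, - of_real nu * z1 - of_real lam * cnj (z2 * z3), of_real mu * z2 - of_real lam * cnj (z3 * z1),
      of_real (nu - mu) * z3 - of_real lam * cnj (z1 * z2)))"

lemma ode_field_proj:
  "ode_field lam mu nu p =
     (0, - of_real nu * fst (snd p) - of_real lam * cnj (fst (snd (snd p)) * snd (snd (snd p))),
      of_real mu * fst (snd (snd p)) - of_real lam * cnj (snd (snd (snd p)) * fst (snd p)),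
      of_real (nu - mu) * snd (snd (snd p)) - of_real lam * cnj (fst (snd p) * fst (snd (snd p))))"
  by (simp add: ode_field_def split: prod.split)

lemma has_vector_derivative_Pair_iff:
  "((\<lambda>t. (f t, g t)) has_vector_derivative (f', g')) (at x within s) \<longleftrightarrow>
     (f has_vector_derivative f') (at x within s) \<and> (g has_vector_derivative g') (at x within s)"
proof
  assume "((\<lambda>t. (f t, g t)) has_vector_derivative (f', g')) (at x within s)"
  from bounded_linear.has_vector_derivative[OF bounded_linear_fst this]
    bounded_linear.has_vector_derivative[OF bounded_linear_snd this]
  show "(f has_vector_derivative f') (at x within s) \<and> (g has_vector_derivative g') (at x within s)"
    by simp
qed (auto intro: has_vector_derivative_Pair)

lemma is_solution_iff:
  "is_solution lam mu nu p0 I x1 z1 z2 z3 \<longleftrightarrow>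
     (x1 0, z1 0, z2 0, z3 0) = p0 \<and>
     (\<forall>t\<in>I. ((\<lambda>t. (x1 t, z1 t, z2 t, z3 t)) has_vector_derivative
                ode_field lam mu nu (x1 t, z1 t, z2 t, z3 t)) (at t))"
  by (simp add: is_solution_def ode_field_def has_vector_derivative_Pair_iff
      has_real_derivative_iff_has_vector_derivative)

lemma ode_field_scale: "ode_field (k * lam) (k * mu) (k * nu) p = k *\<^sub>R ode_field lam mu nu p"
  by (cases p) (simp add: ode_field_def scaleR_conv_of_real algebra_simps)

lemma ode_field_cross_orthogonal:
  fixes c1 a1 b1 c2 a2 b2 :: real and p :: R7
  defines "V \<equiv> ode_field (a1 * b2 - b1 * a2) (b1 * c2 - c1 * b2) (c1 * a2 - a1 * c2) p"
  shows "V \<bullet> inf_act c1 a1 b1 p = 0" and "V \<bullet> inf_act c2 a2 b2 p = 0"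
  by (cases p; simp only: V_def ode_field_def inf_act_def prod.case inner_R7; simp add: algebra_simps)+

lemma ode_field_cross_norm:
  fixes c1 a1 b1 c2 a2 b2 :: real and p :: R7
  defines "V \<equiv> ode_field (a1 * b2 - b1 * a2) (b1 * c2 - c1 * b2) (c1 * a2 - a1 * c2) p"
  shows "V \<bullet> V = gram_det (inf_act c1 a1 b1 p) (inf_act c2 a2 b2 p)"
  by (cases p; simp only: V_def gram_det_def ode_field_def inf_act_def prod.case inner_R7;
      simp add: algebra_simps power2_eq_square)

lemma phi0_ode_field_cross:
  fixes c1 a1 b1 c2 a2 b2 :: real and p :: R7
  defines "V \<equiv> ode_field (a1 * b2 - b1 * a2) (b1 * c2 - c1 * b2) (c1 * a2 - a1 * c2) p"
  shows "phi0 V (inf_act c1 a1 b1 p) (inf_act c2 a2 b2 p)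
    = gram_det (inf_act c1 a1 b1 p) (inf_act c2 a2 b2 p)"
  by (cases p; simp only: V_def gram_det_def ode_field_def inf_act_def prod.case inner_R7 phi0_def dx3_def coord_def;
      simp add: algebra_simps power2_eq_square)

lemma ode_field_frame:
  fixes p :: R7
  assumes "\<tau> \<noteq> 0"
    and cross: "a1 * b2 - b1 * a2 = \<tau> * lam" "b1 * c2 - c1 * b2 = \<tau> * mu" "c1 * a2 - a1 * c2 = \<tau> * nu"
  defines "V \<equiv> ode_field lam mu nu p" and "X1 \<equiv> inf_act c1 a1 b1 p" and "X2 \<equiv> inf_act c2 a2 b2 p"
  assumes gram: "gram_det X1 X2 > 0"
  shows "V \<bullet> X1 = 0" and "V \<bullet> X2 = 0" and "V \<noteq> 0" and "sgn \<tau> * phi0 V X1 X2 = vol3 V X1 X2"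
proof -
  have V: "\<tau> *\<^sub>R V = ode_field (a1 * b2 - b1 * a2) (b1 * c2 - c1 * b2) (c1 * a2 - a1 * c2) p"
    unfolding cross ode_field_scale V_def ..
  show o1: "V \<bullet> X1 = 0" and o2: "V \<bullet> X2 = 0"
    using ode_field_cross_orthogonal[of a1 b2 b1 a2 c2 c1 p] \<open>\<tau> \<noteq> 0\<close> unfolding V[symmetric] X1_def X2_def
    by simp_all
  have "\<tau>\<^sup>2 * (V \<bullet> V) = gram_det X1 X2"
    using ode_field_cross_norm[of a1 b2 b1 a2 c2 c1 p] unfolding V[symmetric] X1_def X2_def
    by (simp add: power2_eq_square algebra_simps)
  then have VV: "V \<bullet> V = gram_det X1 X2 / \<tau>\<^sup>2"
    using \<open>\<tau> \<noteq> 0\<close> by (simp add: field_simps)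
  then show "V \<noteq> 0"
    using gram \<open>\<tau> \<noteq> 0\<close> by auto
  have "\<tau> * phi0 V X1 X2 = gram_det X1 X2"
    using phi0_ode_field_cross[of a1 b2 b1 a2 c2 c1 p] unfolding V[symmetric] X1_def X2_def phi0_scaleR_left .
  then have "sgn \<tau> * phi0 V X1 X2 = gram_det X1 X2 / \<bar>\<tau>\<bar>"
    using \<open>\<tau> \<noteq> 0\<close> by (cases "\<tau> > 0") (simp_all add: field_simps)
  also have "\<dots> = sqrt (gram_det X1 X2 / \<tau>\<^sup>2) * sqrt (gram_det X1 X2)"
    using gram by (simp add: real_sqrt_divide real_sqrt_mult[symmetric])
  also have "\<dots> = vol3 V X1 X2"
    using VV o1 o2 by (simp add: vol3_orthogonal norm_eq_sqrt_inner)
  finally show "sgn \<tau> * phi0 V X1 X2 = vol3 V X1 X2" .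
qed

section \<open>The Lie algebra of the symmetry group\<close>

lemma lie_algebra_basis:
  fixes lam mu nu :: real
  assumes "lam \<noteq> 0 \<or> mu \<noteq> 0 \<or> nu \<noteq> 0"
  obtains c1 a1 b1 c2 a2 b2 \<tau> where "lam * c1 + mu * a1 + nu * b1 = 0" "lam * c2 + mu * a2 + nu * b2 = 0"
    and "\<tau> \<noteq> 0"
    and "a1 * b2 - b1 * a2 = \<tau> * lam" "b1 * c2 - c1 * b2 = \<tau> * mu" "c1 * a2 - a1 * c2 = \<tau> * nu"
    and "\<And>c a b. lam * c + mu * a + nu * b = 0 \<Longrightarrow>
           \<exists>s1 s2. c = s1 * c1 + s2 * c2 \<and> a = s1 * a1 + s2 * a2 \<and> b = s1 * b1 + s2 * b2"
proof (cases "lam = 0")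
  case False
  have span: "\<exists>s1 s2. c = s1 * - mu + s2 * - nu \<and> a = s1 * lam + s2 * 0 \<and> b = s1 * 0 + s2 * lam"
    if "lam * c + mu * a + nu * b = 0" for c a b
  proof -
    have "c = a / lam * - mu + b / lam * - nu"
      using that False by (simp add: field_simps)
    then show ?thesis
      using False by (intro exI[of _ "a / lam"] exI[of _ "b / lam"]) simp
  qed
  show ?thesis
    by (rule that[of "- mu" lam 0 "- nu" 0 lam lam, OF _ _ _ _ _ _ span]) (use False in \<open>simp_all add: algebra_simps\<close>)
next
  case True
  have span: "\<exists>s1 s2. c = s1 * 1 + s2 * 0 \<and> a = s1 * 0 + s2 * - nu \<and> b = s1 * 0 + s2 * mu"
    if "lam * c + mu * a + nu * b = 0" for c a b
  proof -
    have g: "mu * a + nu * b = 0" and mu_nu: "mu \<noteq> 0 \<or> nu \<noteq> 0"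
      using that True assms by simp_all
    have "\<exists>s. a = s * - nu \<and> b = s * mu"
    proof (cases "mu = 0")
      case True
      then show ?thesis
        using g mu_nu by (intro exI[of _ "- a / nu"]) (simp add: field_simps)
    next
      case False
      have "mu * a = mu * (b / mu * - nu)"
        using g False by (simp add: mult.commute eq_neg_iff_add_eq_0)
      then have "a = b / mu * - nu"
        using mult_left_cancel[OF False] by blast
      then show ?thesis
        using False by (intro exI[of _ "b / mu"]) simp
    qed
    then show ?thesis
      by auto
  qed
  show ?thesis
    by (rule that[of 1 0 0 0 "- nu" mu "- 1", OF _ _ _ _ _ _ span]) (use True in \<open>simp_all add: algebra_simps\<close>)
qed

lemma inf_act_eq_0_iff:
  "inf_act c a b (x, z1, z2, z3) = 0 \<longleftrightarrow> c = 0 \<and> a * z1 = 0 \<and> b * z2 = 0 \<and> (a + b) * z3 = 0"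
  by (auto simp: inf_act_def zero_prod_def)

lemma orbit_2dim_iff:
  "orbit_2dim lam mu nu p \<longleftrightarrow> (\<forall>a b. mu * a + nu * b = 0 \<and> inf_act 0 a b p = 0 \<longrightarrow> a = 0 \<and> b = 0)"
  by (cases p) (auto simp: orbit_2dim_def inf_act_eq_0_iff)

lemma gram_det_inf_act_pos:
  assumes orb: "orbit_2dim lam mu nu p" and nz: "lam \<noteq> 0 \<or> mu \<noteq> 0 \<or> nu \<noteq> 0" and "\<tau> \<noteq> 0"
    and cross: "a1 * b2 - b1 * a2 = \<tau> * lam" "b1 * c2 - c1 * b2 = \<tau> * mu" "c1 * a2 - a1 * c2 = \<tau> * nu"
    and g: "lam * c1 + mu * a1 + nu * b1 = 0" "lam * c2 + mu * a2 + nu * b2 = 0"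
  shows "gram_det (inf_act c1 a1 b1 p) (inf_act c2 a2 b2 p) > 0"
  unfolding gram_det_pos_iff_independent
proof (intro allI impI)
  fix s1 s2 assume "s1 *\<^sub>R inf_act c1 a1 b1 p + s2 *\<^sub>R inf_act c2 a2 b2 p = 0"
  then have "inf_act (s1 * c1 + s2 * c2) (s1 * a1 + s2 * a2) (s1 * b1 + s2 * b2) p = 0"
    by (simp add: inf_act_linear)
  moreover have "lam * (s1 * c1 + s2 * c2) + mu * (s1 * a1 + s2 * a2) + nu * (s1 * b1 + s2 * b2)
      = s1 * (lam * c1 + mu * a1 + nu * b1) + s2 * (lam * c2 + mu * a2 + nu * b2)"
    by (simp add: algebra_simps)
  then have "lam * (s1 * c1 + s2 * c2) + mu * (s1 * a1 + s2 * a2) + nu * (s1 * b1 + s2 * b2) = 0"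
    by (simp only: g mult_zero_right add_0)
  ultimately have z: "s1 * c1 + s2 * c2 = 0" "s1 * a1 + s2 * a2 = 0" "s1 * b1 + s2 * b2 = 0"
    using orb unfolding orbit_2dim_def by blast+
  text \<open>A vanishing combination of the basis kills the cross product, which is a nonzero
    multiple of the normal.\<close>
  have "s1 * (\<tau> * lam) = b2 * (s1 * a1 + s2 * a2) - a2 * (s1 * b1 + s2 * b2)"
    "s1 * (\<tau> * mu) = c2 * (s1 * b1 + s2 * b2) - b2 * (s1 * c1 + s2 * c2)"
    "s1 * (\<tau> * nu) = a2 * (s1 * c1 + s2 * c2) - c2 * (s1 * a1 + s2 * a2)"
    "s2 * (\<tau> * lam) = a1 * (s1 * b1 + s2 * b2) - b1 * (s1 * a1 + s2 * a2)"
    "s2 * (\<tau> * mu) = b1 * (s1 * c1 + s2 * c2) - c1 * (s1 * b1 + s2 * b2)"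
    "s2 * (\<tau> * nu) = c1 * (s1 * a1 + s2 * a2) - a1 * (s1 * c1 + s2 * c2)"
    unfolding cross[symmetric] by (simp_all add: algebra_simps)
  then have "s1 * (\<tau> * lam) = 0" "s1 * (\<tau> * mu) = 0" "s1 * (\<tau> * nu) = 0"
    "s2 * (\<tau> * lam) = 0" "s2 * (\<tau> * mu) = 0" "s2 * (\<tau> * nu) = 0"
    by (simp_all only: z mult_zero_right diff_zero)
  then show "s1 = 0 \<and> s2 = 0"
    using nz \<open>\<tau> \<noteq> 0\<close> by auto
qed

section \<open>Local existence of solutions\<close>

lemma norm_integral_diff_le:
  fixes g :: "real \<Rightarrow> 'a::banach"
  assumes g: "continuous_on {a..b} g" and B: "\<And>x. x \<in> {a..b} \<Longrightarrow> norm (g x) \<le> B"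
    and u: "u \<in> {a..b}" and v: "v \<in> {a..b}"
  shows "norm (integral {a..u} g - integral {a..v} g) \<le> B * \<bar>u - v\<bar>"
proof -
  have deriv: "((\<lambda>u. integral {a..u} g) has_derivative (\<lambda>h. h *\<^sub>R g x)) (at x within {a..b})"
    if "x \<in> {a..b}" for x
    using integral_has_vector_derivative[OF g that] by (simp add: has_vector_derivative_def)
  have onorm: "onorm (\<lambda>h. h *\<^sub>R g x) \<le> B" if "x \<in> {a..b}" for x
  proof (rule onorm_bound)
    show "0 \<le> B"
      using B[OF that] norm_ge_zero[of "g x"] by linarith
    show "norm (h *\<^sub>R g x) \<le> B * norm h" for h
      using mult_left_mono[OF B[OF that] abs_ge_zero[of h]] by (simp add: mult.commute)
  qed
  from differentiable_bound[OF convex_closed_interval(1) deriv onorm u v] show ?thesis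
    by simp
qed

lemma ext_cont_in_bcontfun:
  fixes g :: "'a::euclidean_space \<Rightarrow> 'b::metric_space"
  assumes "continuous_on (cbox a b) g"
  shows "ext_cont g a b \<in> bcontfun"
proof -
  obtain h :: "'a \<Rightarrow>\<^sub>C 'b" where "\<And>x. h x = g (clamp a b x)"
    using continuous_on_cbox_bcontfunE[OF assms] by metis
  then have "ext_cont g a b = apply_bcontfun h"
    by (simp add: ext_cont_def fun_eq_iff)
  then show ?thesis
    using apply_bcontfun by simp
qed

(* Clamping to [-e, e] makes the Picard iterate a bounded continuous function on all of R. *)
definition picard_op :: "('a::banach \<Rightarrow> 'a) \<Rightarrow> 'a \<Rightarrow> real \<Rightarrow> (real \<Rightarrow>\<^sub>C 'a) \<Rightarrow> (real \<Rightarrow>\<^sub>C 'a)" where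
  "picard_op f y0 e y = Bcontfun (ext_cont
     (\<lambda>t. y0 + (integral {-e..t} (\<lambda>s. f (y s)) - integral {-e..0} (\<lambda>s. f (y s)))) (-e) e)"

lemma picard_op_apply:
  assumes "continuous_on UNIV f"
  shows "picard_op f y0 e y t
    = y0 + (integral {-e..clamp (-e) e t} (\<lambda>s. f (y s)) - integral {-e..0} (\<lambda>s. f (y s)))"
proof -
  have "continuous_on {-e..e} (\<lambda>s. f (y s))"
    by (rule continuous_on_compose2[OF assms]) auto
  then have "continuous_on (cbox (-e) e)
      (\<lambda>t. y0 + (integral {-e..t} (\<lambda>s. f (y s)) - integral {-e..0} (\<lambda>s. f (y s))))"
    unfolding cbox_interval
    by (intro continuous_intros indefinite_integral_continuous_1 integrable_continuous_interval)
  from ext_cont_in_bcontfun[OF this] show ?thesis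
    by (simp add: picard_op_def Bcontfun_inverse ext_cont_def)
qed

lemma picard_op_maps_ball:
  assumes cont: "continuous_on UNIV f" and e: "0 < e" "e * M \<le> r"
    and M: "\<And>x. x \<in> cball y0 r \<Longrightarrow> norm (f x) \<le> M"
    and y: "y \<in> PiC UNIV (\<lambda>_. cball y0 r)"
  shows "picard_op f y0 e y \<in> PiC UNIV (\<lambda>_. cball y0 r)"
proof -
  have cf: "continuous_on {-e..e} (\<lambda>s. f (y s))"
    by (rule continuous_on_compose2[OF cont]) auto
  have "y 0 \<in> cball y0 r"
    using y by (simp add: mem_PiC_iff Pi_iff)
  then have "0 \<le> r"
    using zero_le_dist[of y0 "y 0"] unfolding mem_cball by linarith
  then have "0 \<le> M"
    using order_trans[OF norm_ge_zero M[of y0]] by simp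
  have "norm (integral {-e..clamp (-e) e t} (\<lambda>s. f (y s)) - integral {-e..0} (\<lambda>s. f (y s))) \<le> r" for t
  proof -
    have c: "clamp (-e) e t \<in> {-e..e}"
      using e clamp_in_interval[of "-e" e t] by (simp add: cbox_interval)
    have "norm (integral {-e..clamp (-e) e t} (\<lambda>s. f (y s)) - integral {-e..0} (\<lambda>s. f (y s)))
        \<le> M * \<bar>clamp (-e) e t - 0\<bar>"
      by (rule norm_integral_diff_le[OF cf _ c]) (use y e in \<open>auto simp: mem_PiC_iff Pi_iff intro: M\<close>)
    also have "\<dots> \<le> M * e"
      using c \<open>0 \<le> M\<close> by (intro mult_left_mono) auto
    finally show ?thesis
      using e by (simp add: mult.commute)
  qed
  then show ?thesis
    by (simp add: mem_PiC_iff Pi_iff picard_op_apply[OF cont] dist_norm norm_minus_commute)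
qed

lemma picard_op_contraction:
  assumes cont: "continuous_on UNIV f" and e: "0 < e" and lip: "L-lipschitz_on (cball y0 r) f"
    and y: "y \<in> PiC UNIV (\<lambda>_. cball y0 r)" and w: "w \<in> PiC UNIV (\<lambda>_. cball y0 r)"
  shows "dist (picard_op f y0 e y) (picard_op f y0 e w) \<le> e * L * dist y w"
proof (rule dist_bound)
  fix t
  define g where "g s = f (y s) - f (w s)" for s
  have t: "clamp (-e) e t \<in> {-e..e}"
    using e clamp_in_interval[of "-e" e t] by (simp add: cbox_interval)
  have cf: "continuous_on {-e..e} (\<lambda>s. f (x s))" for x :: "real \<Rightarrow>\<^sub>C 'a"
    by (rule continuous_on_compose2[OF cont]) auto
  have g_bound: "norm (g s) \<le> L * dist y w" for s
  proof -
    have "norm (g s) \<le> L * dist (y s) (w s)"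
      using lipschitz_onD[OF lip, of "y s" "w s"] y w by (auto simp: g_def mem_PiC_iff Pi_iff dist_norm)
    also have "\<dots> \<le> L * dist y w"
      using lipschitz_on_nonneg[OF lip] by (intro mult_left_mono dist_bounded)
    finally show ?thesis .
  qed
  have integral_g: "integral {-e..u} (\<lambda>s. f (y s)) - integral {-e..u} (\<lambda>s. f (w s)) = integral {-e..u} g"
    if "u \<in> {-e..e}" for u
    unfolding g_def using that
    by (intro integral_diff[symmetric] integrable_continuous_interval continuous_on_subset[OF cf]) auto
  have "dist (picard_op f y0 e y t) (picard_op f y0 e w t) = norm (integral {-e..clamp (-e) e t} g - integral {-e..0} g)"
    using integral_g[OF t] integral_g[of 0] e
    by (simp add: picard_op_apply[OF cont] dist_norm algebra_simps)
  also have "\<dots> \<le> L * dist y w * \<bar>clamp (-e) e t - 0\<bar>"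
    by (rule norm_integral_diff_le[OF _ g_bound t]) (use e in \<open>auto simp: g_def intro!: continuous_on_diff cf\<close>)
  also have "\<dots> \<le> L * dist y w * e"
    using t lipschitz_on_nonneg[OF lip] by (intro mult_left_mono) auto
  finally show "dist (picard_op f y0 e y t) (picard_op f y0 e w t) \<le> e * L * dist y w"
    by (simp add: algebra_simps)
qed

lemma picard_op_fixed_point_solves:
  assumes cont: "continuous_on UNIV f" and e: "0 < e" and fixed: "picard_op f y0 e y = y"
  shows "y 0 = y0" and "\<And>t. t \<in> {-e<..<e} \<Longrightarrow> (y has_vector_derivative f (y t)) (at t)"
proof -
  define J where "J t = integral {-e..t} (\<lambda>s. f (y s))" for t
  have y: "y t = y0 + (J (clamp (-e) e t) - J 0)" for t
    using picard_op_apply[OF cont, of y0 e y t] fixed by (simp add: J_def)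
  have clamp_id: "clamp (-e) e t = t" if "t \<in> {-e..e}" for t
    using that by (simp add: cbox_interval)
  show "y 0 = y0"
    using e by (simp add: y clamp_id)
  fix t assume t: "t \<in> {-e<..<e}"
  have "(J has_vector_derivative f (y t)) (at t within {-e..e})"
    unfolding J_def using t by (intro integral_has_vector_derivative continuous_on_compose2[OF cont]) auto
  then have "((\<lambda>u. y0 + (J u - J 0)) has_vector_derivative 0 + (f (y t) - 0)) (at t within {-e..e})"
    by (intro has_vector_derivative_add has_vector_derivative_diff has_vector_derivative_const)
  then have "((\<lambda>u. y0 + (J u - J 0)) has_vector_derivative f (y t)) (at t)"
    using t at_within_interior[of t "{-e..e}"] by simp
  then show "(y has_vector_derivative f (y t)) (at t)"
    by (rule has_vector_derivative_transform_within_open[OF _ open_greaterThanLessThan t])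
      (simp add: y clamp_id)
qed

lemma lipschitz_on_cball_norm_le:
  assumes lip: "L-lipschitz_on (cball y0 r) f" and x: "x \<in> cball y0 r"
  shows "norm (f x) \<le> norm (f y0) + L * r"
proof -
  have "y0 \<in> cball y0 r"
    using x by (auto intro: order_trans[OF zero_le_dist])
  then have "dist (f x) (f y0) \<le> L * dist x y0"
    using lipschitz_onD[OF lip x] by blast
  also have "\<dots> \<le> L * r"
    using x lipschitz_on_nonneg[OF lip] by (intro mult_left_mono) (auto simp: dist_commute)
  finally show ?thesis
    using norm_triangle_sub[of "f x" "f y0"] by (simp add: dist_norm)
qed

lemma picard_step_size:
  fixes r M L :: real
  assumes "0 < r" "0 \<le> M" "0 \<le> L"
  obtains e where "0 < e" "e * M \<le> r" "e * L \<le> 1 / 2"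
proof
  define e where "e = min (r / (M + 1)) (1 / (2 * (L + 1)))"
  show "0 < e"
    using assms by (simp add: e_def)
  have "e * M \<le> r / (M + 1) * M"
    using assms by (intro mult_right_mono) (auto simp: e_def)
  also have "\<dots> \<le> r"
    using assms by (simp add: field_simps)
  finally show "e * M \<le> r" .
  have "e * L \<le> 1 / (2 * (L + 1)) * L"
    using assms by (intro mult_right_mono) (auto simp: e_def)
  also have "\<dots> \<le> 1 / 2"
    using assms by (simp add: field_simps)
  finally show "e * L \<le> 1 / 2" .
qed

lemma ode_local_existence:
  fixes f :: "'a::banach \<Rightarrow> 'a"
  assumes cont: "continuous_on UNIV f" and r: "0 < r" and lip: "L-lipschitz_on (cball y0 r) f"
  shows "\<exists>e>0. \<exists>y. y 0 = y0 \<and> (\<forall>t\<in>{-e<..<e}. (y has_vector_derivative f (y t)) (at t))"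
proof -
  define M where "M = norm (f y0) + L * r"
  have M: "\<And>x. x \<in> cball y0 r \<Longrightarrow> norm (f x) \<le> M"
    unfolding M_def by (rule lipschitz_on_cball_norm_le[OF lip])
  have "0 \<le> M"
    using r lipschitz_on_nonneg[OF lip] by (simp add: M_def)
  then obtain e where e: "0 < e" "e * M \<le> r" "e * L \<le> 1 / 2"
    using picard_step_size r lipschitz_on_nonneg[OF lip] by blast
  define S where "S = PiC UNIV (\<lambda>_::real. cball y0 r)"
  have "\<exists>!y\<in>S. picard_op f y0 e y = y"
  proof (rule Banach_fix[where c = "1 / 2"])
    show "complete S"
      by (simp add: S_def complete_eq_closed closed_PiC)
    have "const_bcontfun y0 \<in> S"
      using r by (simp add: S_def mem_PiC_iff const_bcontfun.rep_eq)
    then show "S \<noteq> {}"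
      by blast
    show "picard_op f y0 e ` S \<subseteq> S"
      using picard_op_maps_ball[OF cont e(1,2) M] by (auto simp: S_def)
    show "dist (picard_op f y0 e y) (picard_op f y0 e w) \<le> 1 / 2 * dist y w" if "y \<in> S" "w \<in> S" for y w
      using picard_op_contraction[OF cont e(1) lip, of y w] that mult_right_mono[OF e(3) zero_le_dist[of y w]]
      by (simp add: S_def)
  qed simp_all
  then obtain y where "picard_op f y0 e y = y"
    by blast
  then show ?thesis
    using picard_op_fixed_point_solves[OF cont e(1)] e(1) by blast
qed

definition ode_field_derivative :: "real \<Rightarrow> real \<Rightarrow> real \<Rightarrow> R7 \<Rightarrow> R7 \<Rightarrow> R7" where
  "ode_field_derivative lam mu nu p h = (case p of (x, z1, z2, z3) \<Rightarrow> case h of (y, w1, w2, w3) \<Rightarrow>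
     (0, - of_real nu * w1 - of_real lam * cnj (w2 * z3 + z2 * w3),
      of_real mu * w2 - of_real lam * cnj (w3 * z1 + z3 * w1),
      of_real (nu - mu) * w3 - of_real lam * cnj (w1 * z2 + z1 * w2)))"

lemma ode_field_derivative_proj:
  "ode_field_derivative lam mu nu p h =
     (0, - of_real nu * fst (snd h)
          - of_real lam * cnj (fst (snd (snd h)) * snd (snd (snd p)) + fst (snd (snd p)) * snd (snd (snd h))),
      of_real mu * fst (snd (snd h))
          - of_real lam * cnj (snd (snd (snd h)) * fst (snd p) + snd (snd (snd p)) * fst (snd h)),
      of_real (nu - mu) * snd (snd (snd h))
          - of_real lam * cnj (fst (snd h) * fst (snd (snd p)) + fst (snd p) * fst (snd (snd h))))"
  by (simp add: ode_field_derivative_def split: prod.split)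

lemma has_derivative_ode_field:
  "(ode_field lam mu nu has_derivative ode_field_derivative lam mu nu p) (at p)"
  unfolding ode_field_proj[abs_def] ode_field_derivative_proj[abs_def]
  by (rule derivative_eq_intros refl | simp add: algebra_simps)+

lemma continuous_ode_field_derivative:
  "continuous_on UNIV (\<lambda>p. Blinfun (ode_field_derivative lam mu nu p))"
proof (rule continuous_on_blinfun_componentwise)
  fix i :: R7
  have "bounded_linear (ode_field_derivative lam mu nu p)" for p
    using has_derivative_ode_field by (rule has_derivative_bounded_linear)
  then show "continuous_on UNIV (\<lambda>p. blinfun_apply (Blinfun (ode_field_derivative lam mu nu p)) i)"
    by (simp add: bounded_linear_Blinfun_apply ode_field_derivative_proj continuous_intros)
qed

lemma ode_field_lipschitz_on_cball:
  obtains r L where "0 < r" and "L-lipschitz_on (cball p r) (ode_field lam mu nu)"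
proof -
  have "local_lipschitz UNIV UNIV (\<lambda>_::real. ode_field lam mu nu)"
  proof (rule c1_implies_local_lipschitz[where f' = "\<lambda>q. Blinfun (ode_field_derivative lam mu nu (snd q))"])
    show "continuous_on (UNIV \<times> UNIV) (\<lambda>q::real \<times> R7. Blinfun (ode_field_derivative lam mu nu (snd q)))"
      by (rule continuous_on_compose2[OF continuous_ode_field_derivative continuous_on_snd[OF continuous_on_id]]) simp
  qed (simp_all add: bounded_linear_Blinfun_apply has_derivative_bounded_linear[OF has_derivative_ode_field]
         has_derivative_ode_field)
  then show ?thesis
  proof (rule local_lipschitzE[OF _ UNIV_I UNIV_I, where t = 0 and x = p])
    fix u L
    assume u: "0 < u"
      and lip: "\<And>s. s \<in> cball 0 u \<inter> UNIV \<Longrightarrow> L-lipschitz_on (cball p u \<inter> UNIV) (ode_field lam mu nu)"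
    have "L-lipschitz_on (cball p u) (ode_field lam mu nu)"
      using lip[of 0] u by simp
    with u show ?thesis
      by (rule that)
  qed
qed

lemma is_solution_exists:
  "\<exists>e>0. \<exists>x1 z1 z2 z3. is_solution lam mu nu p0 {-e<..<e} x1 z1 z2 z3"
proof -
  obtain r L where "0 < r" "L-lipschitz_on (cball p0 r) (ode_field lam mu nu)"
    by (rule ode_field_lipschitz_on_cball)
  moreover have "continuous_on UNIV (ode_field lam mu nu)"
    unfolding ode_field_proj[abs_def] by (intro continuous_intros)
  ultimately obtain e P where "0 < e" "P 0 = p0"
    and P: "\<And>t. t \<in> {-e<..<e} \<Longrightarrow> (P has_vector_derivative ode_field lam mu nu (P t)) (at t)"
    using ode_local_existence by blast
  then have "is_solution lam mu nu p0 {-e<..<e}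
      (\<lambda>t. fst (P t)) (\<lambda>t. fst (snd (P t))) (\<lambda>t. fst (snd (snd (P t)))) (\<lambda>t. snd (snd (snd (P t))))"
    by (simp add: is_solution_iff)
  then show ?thesis
    using \<open>0 < e\<close> by blast
qed

section \<open>Orbits stay two-dimensional along solutions\<close>

lemma norm_R7_component_le:
  shows "cmod z1 \<le> norm ((x, z1, z2, z3) :: R7)" and "cmod z2 \<le> norm ((x, z1, z2, z3) :: R7)"
    and "cmod z3 \<le> norm ((x, z1, z2, z3) :: R7)"
  by (meson norm_fst_le norm_snd_le order_trans)+

lemma norm_R7_le: "norm ((x, z1, z2, z3) :: R7) \<le> \<bar>x\<bar> + cmod z1 + cmod z2 + cmod z3"
  using norm_Pair_le[of x "(z1, z2, z3)"] norm_Pair_le[of z1 "(z2, z3)"] norm_Pair_le[of z2 z3]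
  by simp

lemma cmod_scaled_field_component_le:
  fixes k m l :: real and u v w :: complex
  assumes "\<bar>k\<bar> * cmod u \<le> N" "\<bar>k\<bar> * (cmod v * cmod w) \<le> M"
  shows "cmod (of_real k * (of_real m * u - of_real l * cnj (v * w))) \<le> \<bar>m\<bar> * N + \<bar>l\<bar> * M"
proof -
  have "cmod (of_real m * u - of_real l * cnj (v * w)) \<le> \<bar>m\<bar> * cmod u + \<bar>l\<bar> * (cmod v * cmod w)"
    using norm_triangle_ineq4[of "of_real m * u" "of_real l * cnj (v * w)"] by (simp add: norm_mult)
  then have "cmod (of_real k * (of_real m * u - of_real l * cnj (v * w)))
      \<le> \<bar>k\<bar> * (\<bar>m\<bar> * cmod u + \<bar>l\<bar> * (cmod v * cmod w))"
    unfolding norm_mult norm_of_real by (rule mult_left_mono) simp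
  also have "\<dots> = \<bar>m\<bar> * (\<bar>k\<bar> * cmod u) + \<bar>l\<bar> * (\<bar>k\<bar> * (cmod v * cmod w))"
    by (simp add: algebra_simps)
  also have "\<dots> \<le> \<bar>m\<bar> * N + \<bar>l\<bar> * M"
    using assms by (intro add_mono mult_left_mono) auto
  finally show ?thesis .
qed

lemma coefficient_split_le:
  fixes k l m x y r N :: real
  assumes "\<bar>k\<bar> \<le> \<bar>l\<bar> + \<bar>m\<bar>" "\<bar>l\<bar> * y \<le> N" "\<bar>m\<bar> * x \<le> N"
    and "0 \<le> x" "0 \<le> y" "x \<le> r" "y \<le> r" "0 \<le> N"
  shows "\<bar>k\<bar> * (x * y) \<le> 2 * r * N"
proof -
  have "\<bar>k\<bar> * (x * y) \<le> (\<bar>l\<bar> + \<bar>m\<bar>) * (x * y)"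
    using assms by (intro mult_right_mono) auto
  also have "\<dots> = (\<bar>l\<bar> * y) * x + (\<bar>m\<bar> * x) * y"
    by (simp add: algebra_simps)
  also have "\<dots> \<le> N * r + N * r"
    using assms by (intro add_mono mult_mono) auto
  finally show ?thesis
    by (simp add: algebra_simps)
qed

lemma norm_inf_act_ode_field_le:
  "norm (inf_act 0 a b (ode_field lam mu nu p))
     \<le> (2 * (\<bar>mu\<bar> + \<bar>nu\<bar>) + 6 * \<bar>lam\<bar> * norm p) * norm (inf_act 0 a b p)"
proof -
  obtain x z1 z2 z3 where p: "p = (x, z1, z2, z3)"
    by (cases p)
  define N where "N = norm (inf_act 0 a b p)"
  define r where "r = norm p"
  have "inf_act 0 a b p = (0, \<i> * a * z1, \<i> * b * z2, - \<i> * (a + b) * z3)"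
    by (simp add: p inf_act_def)
  then have "cmod (\<i> * a * z1) \<le> N" "cmod (\<i> * b * z2) \<le> N" "cmod (- \<i> * (a + b) * z3) \<le> N"
    unfolding N_def by (simp_all only: norm_R7_component_le)
  then have N: "\<bar>a\<bar> * cmod z1 \<le> N" "\<bar>b\<bar> * cmod z2 \<le> N" "\<bar>a + b\<bar> * cmod z3 \<le> N"
    by (simp_all add: norm_mult flip: of_real_add)
  have r: "cmod z1 \<le> r" "cmod z2 \<le> r" "cmod z3 \<le> r"
    by (simp_all only: r_def p norm_R7_component_le)
  have N0: "0 \<le> N" and r0: "0 \<le> r"
    by (simp_all add: N_def r_def)
  text \<open>Each of a, b, a + b is the sum or difference of the other two, so the quadratic
    terms of the field are controlled by N too.\<close>
  have cubic1: "\<bar>a\<bar> * (cmod z2 * cmod z3) \<le> 2 * r * N"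
    by (rule coefficient_split_le[where l = "a + b" and m = b]) (use N r N0 in \<open>simp | arith\<close>)+
  have cubic2: "\<bar>b\<bar> * (cmod z3 * cmod z1) \<le> 2 * r * N"
    by (rule coefficient_split_le[where l = a and m = "a + b"]) (use N r N0 in \<open>simp | arith\<close>)+
  have cubic3: "\<bar>a + b\<bar> * (cmod z1 * cmod z2) \<le> 2 * r * N"
    by (rule coefficient_split_le[where l = b and m = a]) (use N r N0 in \<open>simp | arith\<close>)+
  define u1 where "u1 = of_real a * (of_real (- nu) * z1 - of_real lam * cnj (z2 * z3))"
  define u2 where "u2 = of_real b * (of_real mu * z2 - of_real lam * cnj (z3 * z1))"
  define u3 where "u3 = of_real (a + b) * (of_real (nu - mu) * z3 - of_real lam * cnj (z1 * z2))"
  have "inf_act 0 a b (ode_field lam mu nu p) = (0, \<i> * u1, \<i> * u2, - \<i> * u3)"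
    by (simp add: p u1_def u2_def u3_def inf_act_def ode_field_def algebra_simps)
  then have "norm (inf_act 0 a b (ode_field lam mu nu p)) \<le> cmod u1 + cmod u2 + cmod u3"
    using norm_R7_le[of 0 "\<i> * u1" "\<i> * u2" "- \<i> * u3"] by (simp add: norm_mult)
  also have "\<dots> \<le> (\<bar>nu\<bar> * N + \<bar>lam\<bar> * (2 * r * N)) + (\<bar>mu\<bar> * N + \<bar>lam\<bar> * (2 * r * N))
        + (\<bar>nu - mu\<bar> * N + \<bar>lam\<bar> * (2 * r * N))"
    unfolding u1_def u2_def u3_def
    using cmod_scaled_field_component_le[OF N(1) cubic1, of "- nu" lam]
      cmod_scaled_field_component_le[OF N(2) cubic2, of mu lam]
      cmod_scaled_field_component_le[OF N(3) cubic3, of "nu - mu" lam]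
    by (intro add_mono) simp_all
  also have "\<dots> \<le> (2 * (\<bar>mu\<bar> + \<bar>nu\<bar>) + 6 * \<bar>lam\<bar> * r) * N"
    using mult_right_mono[OF abs_triangle_ineq4[of nu mu] N0] by (simp add: algebra_simps)
  finally show ?thesis
    by (simp add: N_def r_def)
qed

lemma pos_preserved_by_linear_derivative_bound:
  fixes q q' :: "real \<Rightarrow> real"
  assumes deriv: "\<And>t. t \<in> {lo..hi} \<Longrightarrow> (q has_real_derivative q' t) (at t)"
    and bound: "\<And>t. t \<in> {lo..hi} \<Longrightarrow> \<bar>q' t\<bar> \<le> K * q t"
    and x: "x \<in> {lo..hi}" and y: "y \<in> {lo..hi}" and pos: "q x > 0"
  shows "q y > 0"
proof (cases "x \<le> y")
  case True
  have "q x * exp (K * x) \<le> q y * exp (K * y)"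
  proof (rule deriv_nonneg_imp_mono[of x y "\<lambda>t. q t * exp (K * t)" "\<lambda>t. (q' t + K * q t) * exp (K * t)"])
    fix t assume "t \<in> {x..y}"
    then have t: "t \<in> {lo..hi}"
      using x y by auto
    show "((\<lambda>t. q t * exp (K * t)) has_real_derivative (q' t + K * q t) * exp (K * t)) (at t)"
      using deriv[OF t] by (auto intro!: derivative_eq_intros simp: algebra_simps)
    show "(q' t + K * q t) * exp (K * t) \<ge> 0"
      using bound[OF t] by (intro mult_nonneg_nonneg) auto
  qed (use True in auto)
  then have "q y * exp (K * y) > 0"
    using mult_pos_pos[OF pos exp_gt_zero[of "K * x"]] by linarith
  then show ?thesis
    by (simp add: zero_less_mult_iff)
next
  case False
  have "q x * exp (- K * x) \<le> q y * exp (- K * y)"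
  proof (rule deriv_nonpos_imp_antimono[of y x "\<lambda>t. q t * exp (- K * t)" "\<lambda>t. (q' t - K * q t) * exp (- K * t)"])
    fix t assume "t \<in> {y..x}"
    then have t: "t \<in> {lo..hi}"
      using x y by auto
    show "((\<lambda>t. q t * exp (- K * t)) has_real_derivative (q' t - K * q t) * exp (- K * t)) (at t)"
      using deriv[OF t] by (auto intro!: derivative_eq_intros simp: algebra_simps)
    show "(q' t - K * q t) * exp (- K * t) \<le> 0"
      using bound[OF t] by (intro mult_nonpos_nonneg) auto
  qed (use False in auto)
  then have "q y * exp (- K * y) > 0"
    using mult_pos_pos[OF pos exp_gt_zero[of "- K * x"]] by linarith
  then show ?thesis
    by (simp add: zero_less_mult_iff)
qed

lemma has_real_derivative_inf_act_sqnorm: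
  assumes "(P has_vector_derivative ode_field lam mu nu (P s)) (at s)"
  shows "((\<lambda>s. inf_act 0 a b (P s) \<bullet> inf_act 0 a b (P s)) has_real_derivative
           2 * (inf_act 0 a b (P s) \<bullet> inf_act 0 a b (ode_field lam mu nu (P s)))) (at s)"
proof -
  define X' where "X' = inf_act 0 a b (ode_field lam mu nu (P s))"
  have "((\<lambda>s. inf_act 0 a b (P s)) has_derivative (\<lambda>h. h *\<^sub>R X')) (at s)"
    using bounded_linear.has_vector_derivative[OF bounded_linear_inf_act assms]
    unfolding X'_def has_vector_derivative_def .
  from has_derivative_inner[OF this this] show ?thesis
    unfolding has_field_derivative_def X'_def[symmetric]
    by (rule has_derivative_eq_rhs) (simp add: fun_eq_iff inner_commute[of X'])
qed

lemma abs_inf_act_sqnorm_derivative_le: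
  fixes a b :: real and p :: R7
  defines "X \<equiv> inf_act 0 a b p"
  shows "\<bar>2 * (X \<bullet> inf_act 0 a b (ode_field lam mu nu p))\<bar>
    \<le> 2 * (2 * (\<bar>mu\<bar> + \<bar>nu\<bar>) + 6 * \<bar>lam\<bar> * norm p) * (X \<bullet> X)"
proof -
  have "\<bar>X \<bullet> inf_act 0 a b (ode_field lam mu nu p)\<bar>
      \<le> norm X * ((2 * (\<bar>mu\<bar> + \<bar>nu\<bar>) + 6 * \<bar>lam\<bar> * norm p) * norm X)"
    unfolding X_def by (rule order_trans[OF Cauchy_Schwarz_ineq2 mult_left_mono[OF norm_inf_act_ode_field_le]]) simp
  then show ?thesis
    by (simp add: abs_mult dot_square_norm power2_eq_square algebra_simps)
qed

lemma orbit_2dim_preserved: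
  assumes deriv: "\<And>s. s \<in> I \<Longrightarrow> (P has_vector_derivative ode_field lam mu nu (P s)) (at s)"
    and I: "is_interval I" "0 \<in> I" "t \<in> I"
    and orb: "orbit_2dim lam mu nu (P 0)"
  shows "orbit_2dim lam mu nu (P t)"
  unfolding orbit_2dim_iff
proof (intro allI impI)
  fix a b assume ab: "mu * a + nu * b = 0 \<and> inf_act 0 a b (P t) = 0"
  define lo where "lo = min 0 t"
  define hi where "hi = max 0 t"
  have sub: "{lo..hi} \<subseteq> I"
  proof
    fix s assume s: "s \<in> {lo..hi}"
    have between: "u \<le> s \<Longrightarrow> s \<le> v \<Longrightarrow> u \<in> I \<Longrightarrow> v \<in> I \<Longrightarrow> s \<in> I" for u v
      using I(1) unfolding is_interval_1 by blast
    show "s \<in> I"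
      using between[of 0 t] between[of t 0] s I(2,3) by (cases "0 \<le> t") (simp_all add: lo_def hi_def)
  qed
  have "continuous_on {lo..hi} P"
    by (rule continuous_on_vector_derivative[where f' = "\<lambda>s. ode_field lam mu nu (P s)"],
        rule has_vector_derivative_at_within) (use sub deriv in auto)
  then have "bounded (P ` {lo..hi})"
    by (intro compact_imp_bounded compact_continuous_image compact_Icc)
  then obtain R where R: "\<And>s. s \<in> {lo..hi} \<Longrightarrow> norm (P s) \<le> R"
    unfolding bounded_iff by blast
  define X where "X s = inf_act 0 a b (P s)" for s
  have bound: "\<bar>2 * (X s \<bullet> inf_act 0 a b (ode_field lam mu nu (P s)))\<bar>
      \<le> 2 * (2 * (\<bar>mu\<bar> + \<bar>nu\<bar>) + 6 * \<bar>lam\<bar> * R) * (X s \<bullet> X s)" if "s \<in> {lo..hi}" for s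
  proof -
    have "2 * (2 * (\<bar>mu\<bar> + \<bar>nu\<bar>) + 6 * \<bar>lam\<bar> * norm (P s)) \<le> 2 * (2 * (\<bar>mu\<bar> + \<bar>nu\<bar>) + 6 * \<bar>lam\<bar> * R)"
      using R[OF that] by (simp add: mult_left_mono)
    from order_trans[OF abs_inf_act_sqnorm_derivative_le mult_right_mono[OF this inner_ge_zero]]
    show ?thesis
      unfolding X_def .
  qed
  have dq: "((\<lambda>s. X s \<bullet> X s) has_real_derivative 2 * (X s \<bullet> inf_act 0 a b (ode_field lam mu nu (P s)))) (at s)"
    if "s \<in> {lo..hi}" for s
    unfolding X_def using has_real_derivative_inf_act_sqnorm[OF deriv] sub that by blast
  show "a = 0 \<and> b = 0"
  proof (rule ccontr)
    assume "\<not> (a = 0 \<and> b = 0)"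
    then have "X 0 \<noteq> 0"
      using orb ab unfolding orbit_2dim_iff X_def by blast
    have "X t \<bullet> X t > 0"
      by (rule pos_preserved_by_linear_derivative_bound[OF dq bound, where x = 0])
        (use \<open>X 0 \<noteq> 0\<close> in \<open>auto simp: lo_def hi_def\<close>)
    then show False
      using ab by (simp add: X_def)
  qed
qed

section \<open>The swept 3-fold\<close>

definition orbit_sweep ::
  "real \<Rightarrow> real \<Rightarrow> real \<Rightarrow> real \<Rightarrow> real \<Rightarrow> real \<Rightarrow> (real \<Rightarrow> R7) \<Rightarrow> real \<times> real \<times> real \<Rightarrow> R7" where
  "orbit_sweep c1 a1 b1 c2 a2 b2 P u = (case u of (t, s1, s2) \<Rightarrow>
     act (s1 * c1 + s2 * c2) (s1 * a1 + s2 * a2) (s1 * b1 + s2 * b2) (P t))"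

lemma has_derivative_orbit_sweep:
  assumes "(P has_vector_derivative V) (at t)"
  shows "(orbit_sweep c1 a1 b1 c2 a2 b2 P has_derivative
      (\<lambda>h. act 0 (s1 * a1 + s2 * a2) (s1 * b1 + s2 * b2)
             (fst h *\<^sub>R V + fst (snd h) *\<^sub>R inf_act c1 a1 b1 (P t) + snd (snd h) *\<^sub>R inf_act c2 a2 b2 (P t))))
    (at (t, s1, s2))"
proof -
  have lin: "((\<lambda>u. fst (snd u) * k1 + snd (snd u) * k2) has_derivative (\<lambda>u. fst (snd u) * k1 + snd (snd u) * k2)) (at u)"
    for k1 k2 :: real and u :: "real \<times> real \<times> real"
    by (rule derivative_eq_intros refl)+
  have "((\<lambda>u. P (fst u)) has_derivative (\<lambda>h. fst h *\<^sub>R V)) (at (t, s1, s2))"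
    using assms unfolding has_vector_derivative_def
    by (intro has_derivative_compose[OF has_derivative_fst[OF has_derivative_ident]]) simp
  from has_derivative_act[OF lin lin lin this]
  show ?thesis
    unfolding orbit_sweep_def case_prod_beta
    by (simp add: inf_act_linear add.assoc)
qed

lemma rotated_frame_calibrated:
  fixes p :: R7
  assumes "\<tau> \<noteq> 0"
    and cross: "a1 * b2 - b1 * a2 = \<tau> * lam" "b1 * c2 - c1 * b2 = \<tau> * mu" "c1 * a2 - a1 * c2 = \<tau> * nu"
    and gram: "gram_det (inf_act c1 a1 b1 p) (inf_act c2 a2 b2 p) > 0"
  shows "inj (\<lambda>h. act 0 a b (fst h *\<^sub>R ode_field lam mu nu p + fst (snd h) *\<^sub>R inf_act c1 a1 b1 p
                              + snd (snd h) *\<^sub>R inf_act c2 a2 b2 p))"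
    and "sgn \<tau> * phi0 (act 0 a b (ode_field lam mu nu p)) (act 0 a b (inf_act c1 a1 b1 p))
                      (act 0 a b (inf_act c2 a2 b2 p))
       = vol3 (act 0 a b (ode_field lam mu nu p)) (act 0 a b (inf_act c1 a1 b1 p))
              (act 0 a b (inf_act c2 a2 b2 p))"
proof -
  note frame = ode_field_frame[OF \<open>\<tau> \<noteq> 0\<close> cross gram]
  show "inj (\<lambda>h. act 0 a b (fst h *\<^sub>R ode_field lam mu nu p + fst (snd h) *\<^sub>R inf_act c1 a1 b1 p
                              + snd (snd h) *\<^sub>R inf_act c2 a2 b2 p))"
    using inj_compose[OF inj_act_rotation inj_orthogonal_frame[OF frame(3,1,2) gram]] by (simp add: comp_def)
  show "sgn \<tau> * phi0 (act 0 a b (ode_field lam mu nu p)) (act 0 a b (inf_act c1 a1 b1 p))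
                      (act 0 a b (inf_act c2 a2 b2 p))
       = vol3 (act 0 a b (ode_field lam mu nu p)) (act 0 a b (inf_act c1 a1 b1 p))
              (act 0 a b (inf_act c2 a2 b2 p))"
    by (simp add: phi0_act_rotation vol3_act_rotation frame(4))
qed

lemma associative_3fold_orbit_sweep:
  fixes P :: "real \<Rightarrow> R7" and I :: "real set"
  assumes I: "open I" "connected I" "I \<noteq> {}"
    and deriv: "\<And>t. t \<in> I \<Longrightarrow> (P has_vector_derivative ode_field lam mu nu (P t)) (at t)"
    and "\<tau> \<noteq> 0"
    and cross: "a1 * b2 - b1 * a2 = \<tau> * lam" "b1 * c2 - c1 * b2 = \<tau> * mu" "c1 * a2 - a1 * c2 = \<tau> * nu"
    and gram: "\<And>t. t \<in> I \<Longrightarrow> gram_det (inf_act c1 a1 b1 (P t)) (inf_act c2 a2 b2 (P t)) > 0"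
  shows "associative_3fold (orbit_sweep c1 a1 b1 c2 a2 b2 P ` (I \<times> UNIV))"
proof -
  define V where "V t = ode_field lam mu nu (P t)" for t
  define X1 where "X1 t = inf_act c1 a1 b1 (P t)" for t
  define X2 where "X2 t = inf_act c2 a2 b2 (P t)" for t
  define D where "D u h = act 0 (fst (snd u) * a1 + snd (snd u) * a2) (fst (snd u) * b1 + snd (snd u) * b2)
    (fst h *\<^sub>R V (fst u) + fst (snd h) *\<^sub>R X1 (fst u) + snd (snd h) *\<^sub>R X2 (fst u))"
    for u h :: "real \<times> real \<times> real"
  have "bounded_linear (D u)" for u
    unfolding D_def
    by (rule bounded_linear_compose[OF bounded_linear_act_rotation], unfold linear_conv_bounded_linear[symmetric])
      (rule linearI; simp add: algebra_simps)
  then have D: "blinfun_apply (Blinfun (D u)) = D u" for u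
    by (rule bounded_linear_Blinfun_apply)
  have "continuous_on I P"
    by (rule continuous_on_vector_derivative, rule has_vector_derivative_at_within, erule deriv)
  then have contP: "continuous_on (I \<times> UNIV) (\<lambda>u. P (fst u))"
    by (rule continuous_on_compose2[OF _ continuous_on_fst[OF continuous_on_id]]) auto
  show ?thesis
    unfolding associative_3fold_def
  proof (intro exI[of _ "I \<times> UNIV"] exI[of _ "orbit_sweep c1 a1 b1 c2 a2 b2 P"] exI[of _ "\<lambda>u. Blinfun (D u)"]
      exI[of _ "sgn \<tau>"] conjI ballI)
    show "open (I \<times> (UNIV :: (real \<times> real) set))" "connected (I \<times> (UNIV :: (real \<times> real) set))"
      "I \<times> (UNIV :: (real \<times> real) set) \<noteq> {}"
      using I by (auto intro: open_Times connected_Times)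
    show "sgn \<tau> = 1 \<or> sgn \<tau> = - 1"
      using \<open>\<tau> \<noteq> 0\<close> by (simp add: sgn_real_def)
    show "continuous_on (I \<times> UNIV) (\<lambda>u. Blinfun (D u))"
    proof (rule continuous_on_blinfun_componentwise)
      fix i :: "real \<times> real \<times> real"
      have "continuous_on (I \<times> UNIV) (\<lambda>u. D u i)"
        unfolding D_def V_def X1_def X2_def act_proj inf_act_proj ode_field_proj
        by (intro continuous_intros contP)
      then show "continuous_on (I \<times> UNIV) (\<lambda>u. blinfun_apply (Blinfun (D u)) i)"
        by (simp add: D)
    qed
  next
    fix u :: "real \<times> real \<times> real" assume "u \<in> I \<times> UNIV"
    then obtain t s1 s2 where u: "u = (t, s1, s2)" and t: "t \<in> I"
      by (cases u) auto
    show "(orbit_sweep c1 a1 b1 c2 a2 b2 P has_derivative blinfun_apply (Blinfun (D u))) (at u)"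
      unfolding D u D_def V_def X1_def X2_def fst_conv snd_conv by (rule has_derivative_orbit_sweep[OF deriv[OF t]])
    show "inj (blinfun_apply (Blinfun (D u)))"
      unfolding D D_def u V_def X1_def X2_def fst_conv snd_conv
      by (rule rotated_frame_calibrated(1)[OF \<open>\<tau> \<noteq> 0\<close> cross gram[OF t]])
    show "sgn \<tau> * phi0 (Blinfun (D u) (1, 0, 0)) (Blinfun (D u) (0, 1, 0)) (Blinfun (D u) (0, 0, 1))
        = vol3 (Blinfun (D u) (1, 0, 0)) (Blinfun (D u) (0, 1, 0)) (Blinfun (D u) (0, 0, 1))"
      using rotated_frame_calibrated(2)[OF \<open>\<tau> \<noteq> 0\<close> cross gram[OF t]]
      unfolding D by (simp add: D_def u V_def X1_def X2_def)
  qed (rule refl)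
qed

lemma swept_eq_orbit_sweep_image:
  assumes g: "lam * c1 + mu * a1 + nu * b1 = 0" "lam * c2 + mu * a2 + nu * b2 = 0"
    and span: "\<And>c a b. lam * c + mu * a + nu * b = 0 \<Longrightarrow>
      \<exists>s1 s2. c = s1 * c1 + s2 * c2 \<and> a = s1 * a1 + s2 * a2 \<and> b = s1 * b1 + s2 * b2"
  shows "swept lam mu nu I x1 z1 z2 z3 = orbit_sweep c1 a1 b1 c2 a2 b2 (\<lambda>t. (x1 t, z1 t, z2 t, z3 t)) ` (I \<times> UNIV)"
proof (rule set_eqI, rule iffI)
  fix q assume "q \<in> swept lam mu nu I x1 z1 z2 z3"
  then obtain t c a b where q: "q = act c a b (x1 t, z1 t, z2 t, z3 t)" and "t \<in> I"
    and "lam * c + mu * a + nu * b = 0"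
    unfolding swept_def by blast
  then obtain s1 s2 where "c = s1 * c1 + s2 * c2" "a = s1 * a1 + s2 * a2" "b = s1 * b1 + s2 * b2"
    using span by blast
  with q \<open>t \<in> I\<close> show "q \<in> orbit_sweep c1 a1 b1 c2 a2 b2 (\<lambda>t. (x1 t, z1 t, z2 t, z3 t)) ` (I \<times> UNIV)"
    by (auto simp: orbit_sweep_def image_iff intro!: bexI[of _ "(t, s1, s2)"])
next
  fix q assume "q \<in> orbit_sweep c1 a1 b1 c2 a2 b2 (\<lambda>t. (x1 t, z1 t, z2 t, z3 t)) ` (I \<times> UNIV)"
  then obtain t s1 s2 where "t \<in> I"
    and q: "q = act (s1 * c1 + s2 * c2) (s1 * a1 + s2 * a2) (s1 * b1 + s2 * b2) (x1 t, z1 t, z2 t, z3 t)"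
    by (auto simp: orbit_sweep_def)
  moreover have "lam * (s1 * c1 + s2 * c2) + mu * (s1 * a1 + s2 * a2) + nu * (s1 * b1 + s2 * b2)
      = s1 * (lam * c1 + mu * a1 + nu * b1) + s2 * (lam * c2 + mu * a2 + nu * b2)"
    by (simp add: algebra_simps)
  ultimately show "q \<in> swept lam mu nu I x1 z1 z2 z3"
    unfolding swept_def using g by auto
qed

lemma swept_not_in_slice:
  assumes "mu \<noteq> 0 \<or> nu \<noteq> 0" and "t \<in> I"
  shows "\<not> swept lam mu nu I x1 z1 z2 z3 \<subseteq> {p. fst p = x}"
proof
  assume slice: "swept lam mu nu I x1 z1 z2 z3 \<subseteq> {p. fst p = x}"
  obtain a b where "lam * 1 + mu * a + nu * b = 0"
  proof (cases "mu = 0")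
    case True
    then show ?thesis
      using assms(1) that[of 0 "- lam / nu"] by simp
  next
    case False
    then show ?thesis
      using that[of "- lam / mu" 0] by simp
  qed
  then have "act 0 0 0 (x1 t, z1 t, z2 t, z3 t) \<in> swept lam mu nu I x1 z1 z2 z3"
    and "act 1 a b (x1 t, z1 t, z2 t, z3 t) \<in> swept lam mu nu I x1 z1 z2 z3"
    unfolding swept_def using \<open>t \<in> I\<close> by force+
  then have "fst (act 0 0 0 (x1 t, z1 t, z2 t, z3 t)) = x" "fst (act 1 a b (x1 t, z1 t, z2 t, z3 t)) = x"
    using slice by blast+
  then show False
    by (simp add: act_def)
qed

lemma Im_triple_product_constant:
  assumes sol: "is_solution lam mu nu p0 I x1 z1 z2 z3" and "convex I"
  shows "\<exists>A::real. \<forall>t\<in>I. Im (z1 t * z2 t * z3 t) = A"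
proof -
  have "((\<lambda>t. Im (z1 t * z2 t * z3 t)) has_derivative (\<lambda>h. 0)) (at t within I)" if "t \<in> I" for t
  proof -
    define D where "D = z1 t * z2 t * (of_real (nu - mu) * z3 t - of_real lam * cnj (z1 t * z2 t))
      + (z1 t * (of_real mu * z2 t - of_real lam * cnj (z3 t * z1 t))
         + (- of_real nu * z1 t - of_real lam * cnj (z2 t * z3 t)) * z2 t) * z3 t"
    have "((\<lambda>t. z1 t * z2 t * z3 t) has_vector_derivative D) (at t)"
      using sol that unfolding is_solution_def D_def by (intro has_vector_derivative_mult) auto
    from bounded_linear.has_vector_derivative[OF bounded_linear_Im this]
    have "((\<lambda>t. Im (z1 t * z2 t * z3 t)) has_vector_derivative Im D) (at t)" .
    moreover have "Im D = 0"
      by (simp add: D_def algebra_simps)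
    ultimately show ?thesis
      by (simp add: has_vector_derivative_def has_derivative_at_withinI)
  qed
  then show ?thesis
    by (rule has_derivative_zero_constant[OF \<open>convex I\<close>])
qed

lemma associative_3fold_swept:
  assumes nz: "lam \<noteq> 0 \<or> mu \<noteq> 0 \<or> nu \<noteq> 0" and orb: "orbit_2dim lam mu nu p0"
    and sol: "is_solution lam mu nu p0 {-e<..<e} x1 z1 z2 z3" and "0 < e"
  shows "associative_3fold (swept lam mu nu {-e<..<e} x1 z1 z2 z3)"
proof -
  obtain c1 a1 b1 c2 a2 b2 \<tau>
    where g: "lam * c1 + mu * a1 + nu * b1 = 0" "lam * c2 + mu * a2 + nu * b2 = 0"
    and "\<tau> \<noteq> 0"
    and cross: "a1 * b2 - b1 * a2 = \<tau> * lam" "b1 * c2 - c1 * b2 = \<tau> * mu" "c1 * a2 - a1 * c2 = \<tau> * nu"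
    and span: "\<And>c a b. lam * c + mu * a + nu * b = 0 \<Longrightarrow>
      \<exists>s1 s2. c = s1 * c1 + s2 * c2 \<and> a = s1 * a1 + s2 * a2 \<and> b = s1 * b1 + s2 * b2"
    by (rule lie_algebra_basis[OF nz]) (rule that)
  define P where "P t = (x1 t, z1 t, z2 t, z3 t)" for t
  have deriv: "\<And>t. t \<in> {-e<..<e} \<Longrightarrow> (P has_vector_derivative ode_field lam mu nu (P t)) (at t)"
    and "P 0 = p0"
    using sol unfolding is_solution_iff P_def by auto
  have "orbit_2dim lam mu nu (P t)" if "t \<in> {-e<..<e}" for t
    using orbit_2dim_preserved[OF deriv is_interval_oo _ that] \<open>0 < e\<close> orb \<open>P 0 = p0\<close> by simp
  then have gram: "gram_det (inf_act c1 a1 b1 (P t)) (inf_act c2 a2 b2 (P t)) > 0" if "t \<in> {-e<..<e}" for t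
    using gram_det_inf_act_pos[OF _ nz \<open>\<tau> \<noteq> 0\<close> cross g] that by blast
  have "swept lam mu nu {-e<..<e} x1 z1 z2 z3 = orbit_sweep c1 a1 b1 c2 a2 b2 P ` ({-e<..<e} \<times> UNIV)"
    unfolding P_def by (rule swept_eq_orbit_sweep_image[OF g span])
  moreover have "associative_3fold (orbit_sweep c1 a1 b1 c2 a2 b2 P ` ({-e<..<e} \<times> UNIV))"
    by (rule associative_3fold_orbit_sweep[OF _ _ _ deriv \<open>\<tau> \<noteq> 0\<close> cross gram]) (use \<open>0 < e\<close> in auto)
  ultimately show ?thesis
    by simp
qed

theorem theorem6p2:
  fixes lam mu nu :: real and p0 :: R7
  assumes "lam \<noteq> 0 \<or> mu \<noteq> 0 \<or> nu \<noteq> 0"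
    and "orbit_2dim lam mu nu p0"
  shows "\<exists>\<epsilon>>0.
     (\<exists>x1 z1 z2 z3. is_solution lam mu nu p0 {-\<epsilon><..<\<epsilon>} x1 z1 z2 z3) \<and>
     (\<forall>x1 z1 z2 z3. is_solution lam mu nu p0 {-\<epsilon><..<\<epsilon>} x1 z1 z2 z3 \<longrightarrow>
        associative_3fold (swept lam mu nu {-\<epsilon><..<\<epsilon>} x1 z1 z2 z3) \<and>
        ((mu \<noteq> 0 \<or> nu \<noteq> 0) \<longrightarrow>
           (\<forall>x. \<not> swept lam mu nu {-\<epsilon><..<\<epsilon>} x1 z1 z2 z3 \<subseteq> {p. fst p = x})) \<and>
        (\<exists>A::real. \<forall>t\<in>{-\<epsilon><..<\<epsilon>}. Im (z1 t * z2 t * z3 t) = A))"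
proof -
  obtain e where "e > 0" and ex: "\<exists>x1 z1 z2 z3. is_solution lam mu nu p0 {-e<..<e} x1 z1 z2 z3"
    using is_solution_exists by blast
  show ?thesis
  proof (rule exI[of _ e], intro conjI allI impI \<open>e > 0\<close> ex)
    fix x1 z1 z2 z3 assume sol: "is_solution lam mu nu p0 {-e<..<e} x1 z1 z2 z3"
    show "associative_3fold (swept lam mu nu {-e<..<e} x1 z1 z2 z3)"
      by (rule associative_3fold_swept[OF assms sol \<open>e > 0\<close>])
    show "\<not> swept lam mu nu {-e<..<e} x1 z1 z2 z3 \<subseteq> {p. fst p = x}" if "mu \<noteq> 0 \<or> nu \<noteq> 0" for x
      using swept_not_in_slice[OF that, of 0] \<open>e > 0\<close> by simp
    show "\<exists>A::real. \<forall>t\<in>{-e<..<e}. Im (z1 t * z2 t * z3 t) = A"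
      by (rule Im_triple_product_constant[OF sol convex_real_interval(8)])
  qed
qed

end
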